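(* Let $\Gamma$ be a weighted digraph with vertex set $\{1,\dots,n\}$, $n>1$, without loops and with strictly positive arc weights, with Laplacian matrix $L$, in-forest dimension $d$, and let $\tilde J=\sigma_{n-d}^{-1}Q_{n-d}$. Then $\tilde J=I-LL^{\#}$, where $L^{\#}$ is the group inverse of $L$.
   Context: $W=(w_{ij})$ is the matrix of arc weights ($w_{ij}>0$ iff there is an arc $i\to j$, else $0$). The Laplacian $L=(\ell_{ij})$: $\ell_{ij}=-w_{ij}$ for $j\ne i$, $\ell_{ii}=\sum_{k\ne i}w_{ik}$. The weight of a subgraph is the product of its arc weights (1 if no arcs); the weight of a set of subgraphs is the sum of their weights. A converging tree is a weakly connected digraph with one vertex (the root) of outdegree 0 and all others of outdegree 1; an in-forest is a spanning subgraph of $\Gamma$ whose weak components are converging trees. The in-forest dimension $d$ is the minimal number of trees in an in-forest (so in-forests have at most $n-d$ arcs). $\sigma_k$ is the total weight of in-forests with $k$ arcs; $Q_k=(q^k_{ij})$ with $q^k_{ij}$ the total weight of in-forests with $k$ arcs in which $i$ lies in a tree rooted at $j$. For a square matrix $A$ of index at most 1 (the index being the least $k\ge0$ with $\operatorname{rank}A^{k+1}=\operatorname{rank}A^k$), the group inverse $A^{\#}$ is the unique matrix $X$ with $AXA=A$, $XAX=X$, $AX=XA$. *)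

theory Defs
  imports "HOL-Analysis.Analysis"
begin

text \<open>Weighted digraph on the finite vertex type 'v, given by its weight matrix
  w :: 'v => 'v => real; there is an arc i -> j iff w i j > 0.\<close>

definition arcs :: "('v \<Rightarrow> 'v \<Rightarrow> real) \<Rightarrow> ('v \<times> 'v) set" where
  "arcs w = {(i, j). w i j > 0}"

definition laplacian :: "('v::finite \<Rightarrow> 'v \<Rightarrow> real) \<Rightarrow> real^'v^'v" where
  "laplacian w = (\<chi> i j. if i = j then (\<Sum>k\<in>UNIV - {i}. w i k) else - w i j)"

text \<open>Spanning subgraphs are given by their arc sets F (vertex set is all of 'v).\<close>

definition outdeg :: "('v \<times> 'v) set \<Rightarrow> 'v \<Rightarrow> nat" where
  "outdeg F v = card {j. (v, j) \<in> F}"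

definition weak_rel :: "('v \<times> 'v) set \<Rightarrow> ('v \<times> 'v) set" where
  "weak_rel F = (F \<union> F\<inverse>)\<^sup>*"

definition weak_components :: "('v \<times> 'v) set \<Rightarrow> 'v set set" where
  "weak_components F = UNIV // weak_rel F"

definition is_converging_tree_comp :: "('v \<times> 'v) set \<Rightarrow> 'v set \<Rightarrow> bool" where
  "is_converging_tree_comp F C \<longleftrightarrow>
     (\<exists>!r. r \<in> C \<and> outdeg F r = 0 \<and> (\<forall>v\<in>C. v \<noteq> r \<longrightarrow> outdeg F v = 1))"

definition in_forest :: "('v \<Rightarrow> 'v \<Rightarrow> real) \<Rightarrow> ('v \<times> 'v) set \<Rightarrow> bool" where
  "in_forest w F \<longleftrightarrow> F \<subseteq> arcs w \<and>
     (\<forall>C\<in>weak_components F. is_converging_tree_comp F C)"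

definition in_forest_dim :: "('v \<Rightarrow> 'v \<Rightarrow> real) \<Rightarrow> nat" where
  "in_forest_dim w = Min {card (weak_components F) | F. in_forest w F}"

definition sg_weight :: "('v \<Rightarrow> 'v \<Rightarrow> real) \<Rightarrow> ('v \<times> 'v) set \<Rightarrow> real" where
  "sg_weight w F = (\<Prod>(i, j)\<in>F. w i j)"

definition in_tree_rooted_at :: "('v \<times> 'v) set \<Rightarrow> 'v \<Rightarrow> 'v \<Rightarrow> bool" where
  "in_tree_rooted_at F i j \<longleftrightarrow> (i, j) \<in> weak_rel F \<and> outdeg F j = 0"

definition sigma_k :: "('v \<Rightarrow> 'v \<Rightarrow> real) \<Rightarrow> nat \<Rightarrow> real" where
  "sigma_k w k = (\<Sum>F\<in>{F. in_forest w F \<and> card F = k}. sg_weight w F)"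

definition Q_k :: "('v::finite \<Rightarrow> 'v \<Rightarrow> real) \<Rightarrow> nat \<Rightarrow> real^'v^'v" where
  "Q_k w k = (\<chi> i j. \<Sum>F\<in>{F. in_forest w F \<and> card F = k \<and> in_tree_rooted_at F i j}. sg_weight w F)"

definition is_group_inverse :: "real^'n^'n \<Rightarrow> real^'n^'n \<Rightarrow> bool" where
  "is_group_inverse A X \<longleftrightarrow> A ** X ** A = A \<and> X ** A ** X = X \<and> A ** X = X ** A"

end

theory Submission
  imports Defs
begin

(* Let J = Q/sigma, built from the maximal in-forests, those with n - d arcs.  Maximality
   forces every arc leaving a root to point back into the root's own tree, and this makes the
   arc exchanges below stay within maximal forests: redirecting the out-arc of i matches the
   two halves of (L Q)_ij term by term, and cutting the out-arc of j while hanging the root of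
   the tree of i below j matches the two halves of (Q L)_ij.  Hence L J = J L = 0.
   The rows of J sum to 1 and J_ij is nonzero only if j is reachable from i, so a maximum
   principle for L-harmonic vectors shows that J fixes the kernel of L.  Thus J is the
   projection onto ker L along the range of L: L + J is invertible, (L + J)^-1 - J is the group
   inverse of L, and every group inverse X satisfies J = I - L X. *)

section \<open>Forests as single-valued acyclic relations\<close>

definition forest :: "'v rel \<Rightarrow> bool" where
  "forest F \<longleftrightarrow> single_valued F \<and> acyclic F"

definition parent :: "'v rel \<Rightarrow> 'v \<Rightarrow> 'v" where
  "parent F v = (THE u. (v, u) \<in> F)"

lemma parent_eq: "single_valued F \<Longrightarrow> (v, u) \<in> F \<Longrightarrow> parent F v = u"
  unfolding parent_def by (blast dest: single_valuedD)

lemma parent_in: "single_valued F \<Longrightarrow> v \<in> Domain F \<Longrightarrow> (v, parent F v) \<in> F"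
  using parent_eq by fastforce

lemma forest_subset: "forest F \<Longrightarrow> G \<subseteq> F \<Longrightarrow> forest G"
  unfolding forest_def using single_valued_subset acyclic_subset by blast

lemma forest_insert:
  assumes "forest F" "a \<notin> Domain F" "(b, a) \<notin> F\<^sup>*"
  shows "forest (insert (a, b) F)"
  using assms unfolding forest_def single_valued_def by auto

lemma single_valued_insert_Diff_out_arcs:
  "single_valued F \<Longrightarrow> (v, u) \<in> F \<Longrightarrow> F = insert (v, u) (F - {v} \<times> UNIV)"
  by (auto dest: single_valuedD)

definition reaches_root :: "'v rel \<Rightarrow> 'v \<Rightarrow> 'v \<Rightarrow> bool" where
  "reaches_root F i j \<longleftrightarrow> (i, j) \<in> F\<^sup>* \<and> j \<notin> Domain F"

lemma reaches_root_unique: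
  assumes "single_valued F" "reaches_root F i r" "reaches_root F i r'"
  shows "r = r'"
  using assms single_valued_confluent[OF assms(1)] Not_Domain_rtrancl
  unfolding reaches_root_def by metis

lemma reaches_root_rtrancl_iff:
  assumes "single_valued F" "(k, i) \<in> F\<^sup>*"
  shows "reaches_root F k j \<longleftrightarrow> reaches_root F i j"
proof
  assume "reaches_root F k j"
  then have "(i, j) \<in> F\<^sup>* \<or> (j, i) \<in> F\<^sup>*" "j \<notin> Domain F"
    using single_valued_confluent[OF assms] by (auto simp: reaches_root_def)
  then show "reaches_root F i j" by (auto simp: reaches_root_def Not_Domain_rtrancl)
qed (use assms(2) in \<open>auto simp: reaches_root_def\<close>)

lemma reaches_root_insert_unreached:
  assumes "(k, i) \<notin> H\<^sup>*"
  shows "reaches_root (insert (i, x) H) k j \<longleftrightarrow> reaches_root H k j"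
  using assms by (auto simp: reaches_root_def rtrancl_insert)

lemma reaches_root_insert_root_arc:
  assumes "i \<notin> Domain H" "(k, i) \<notin> H\<^sup>*"
  shows "reaches_root (insert (i, k) H) i j \<longleftrightarrow> reaches_root H k j"
  using assms by (auto simp: reaches_root_def rtrancl_insert Not_Domain_rtrancl)

lemma single_valued_rtrancl_succ:
  assumes "single_valued F" "(v, u) \<in> F" "(v, x) \<in> F\<^sup>*" "v \<noteq> x"
  shows "(u, x) \<in> F\<^sup>*"
proof -
  obtain y where "(v, y) \<in> F" "(y, x) \<in> F\<^sup>*"
    using assms(3,4) by (meson converse_rtranclE)
  with assms(1,2) show ?thesis by (auto dest: single_valuedD)
qed

lemma weak_rel_common_successor:
  assumes "single_valued F" "(u, v) \<in> weak_rel F"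
  shows "\<exists>c. (u, c) \<in> F\<^sup>* \<and> (v, c) \<in> F\<^sup>*"
  using assms(2) unfolding weak_rel_def
proof (induction rule: rtrancl_induct)
  case (step v v')
  then obtain c where c: "(u, c) \<in> F\<^sup>*" "(v, c) \<in> F\<^sup>*" by blast
  show ?case
  proof (cases "(v, v') \<in> F")
    case True
    then show ?thesis
      using c single_valued_rtrancl_succ[OF assms(1) True c(2)]
        by (cases "v = c") (auto intro: rtrancl_into_rtrancl)
  next
    case False
    then have "(v', v) \<in> F" using step.hyps(2) by auto
    then show ?thesis using c by (meson converse_rtrancl_into_rtrancl)
  qed
qed blast

lemma finite_acyclic_reaches_root:
  assumes "finite F" "acyclic F"
  shows "\<exists>r. reaches_root F v r"
  unfolding reaches_root_def
  using finite_acyclic_wf_converse[OF assms]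
proof (induction v rule: wf_induct_rule)
  case (less v)
  show ?case
  proof (cases "v \<in> Domain F")
    case True
    then obtain u where "(v, u) \<in> F" by blast
    with less obtain r where "(u, r) \<in> F\<^sup>*" "r \<notin> Domain F" by blast
    with \<open>(v, u) \<in> F\<close> show ?thesis by (meson converse_rtrancl_into_rtrancl)
  qed blast
qed

lemma rtrancl_Diff_out_arcs_to:
  "(x, v) \<in> R\<^sup>* \<Longrightarrow> (x, v) \<in> (R - {v} \<times> UNIV)\<^sup>*"
proof (induction rule: converse_rtrancl_induct)
  case (step x x')
  then show ?case by (cases "x = v") (auto intro: converse_rtrancl_into_rtrancl)
qed simp

lemma rtrancl_Diff_out_arcs_avoiding:
  "(x, y) \<in> R\<^sup>* \<Longrightarrow> (x, v) \<notin> R\<^sup>* \<Longrightarrow> (x, y) \<in> (R - {v} \<times> UNIV)\<^sup>*"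
proof (induction rule: converse_rtrancl_induct)
  case (step x x')
  then have "x \<noteq> v" "(x', v) \<notin> R\<^sup>*" by (auto intro: converse_rtrancl_into_rtrancl)
  with step show ?case by (auto intro: converse_rtrancl_into_rtrancl)
qed simp

section \<open>In-forests of a weighted digraph\<close>

lemma weak_rel_equiv: "equiv UNIV (weak_rel F)"
  unfolding weak_rel_def
  by (intro equivI refl_rtrancl sym_rtrancl sym_Un_converse trans_rtrancl) auto

lemma rtrancl_weak_rel: "(a, b) \<in> F\<^sup>* \<Longrightarrow> (a, b) \<in> weak_rel F"
  unfolding weak_rel_def by (meson in_rtrancl_UnI)

lemma roots_weak_rel_eq:
  assumes "single_valued F" "(r, r') \<in> weak_rel F" "r \<notin> Domain F" "r' \<notin> Domain F"
  shows "r = r'"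
proof -
  obtain c where "(r, c) \<in> F\<^sup>*" "(r', c) \<in> F\<^sup>*"
    using weak_rel_common_successor[OF assms(1,2)] by blast
  with assms(3,4) show ?thesis using Not_Domain_rtrancl by metis
qed

lemma weak_components_cases:
  assumes "C \<in> weak_components F"
  obtains x where "C = weak_rel F `` {x}"
  using assms unfolding weak_components_def by (auto elim: quotientE)

lemma weak_class_in_components: "weak_rel F `` {x} \<in> weak_components F"
  unfolding weak_components_def by (rule quotientI) simp

lemma outdeg_eq_0_iff: "outdeg F (v::'v::finite) = 0 \<longleftrightarrow> v \<notin> Domain F"
  by (simp add: outdeg_def Domain_iff)

lemma single_valued_iff_outdeg_le_1:
  "single_valued (F :: ('v::finite \<times> 'v) set) \<longleftrightarrow> (\<forall>v. outdeg F v \<le> 1)"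
  by (auto simp: single_valued_def outdeg_def card_le_Suc0_iff_eq)

lemma forest_converging_tree_comp:
  fixes F :: "('v::finite \<times> 'v) set"
  assumes "forest F" "C \<in> weak_components F"
  shows "is_converging_tree_comp F C"
proof -
  have sv: "single_valued F" and ac: "acyclic F" using assms(1) by (auto simp: forest_def)
  obtain x where x: "C = weak_rel F `` {x}" using assms(2) by (rule weak_components_cases)
  obtain r where r: "(x, r) \<in> F\<^sup>*" "r \<notin> Domain F"
    using finite_acyclic_reaches_root[OF _ ac] by (auto simp: reaches_root_def)
  have "r \<in> C" using x rtrancl_weak_rel[OF r(1)] by simp
  have root_unique: "v = r" if "v \<in> C" "v \<notin> Domain F" for v
  proof -
    have "(v, r) \<in> weak_rel F"
      using quotient_eq_iff[OF weak_rel_equiv, of C F C v r] assms(2) that(1) \<open>r \<in> C\<close>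
      by (simp add: weak_components_def)
    then show ?thesis using roots_weak_rel_eq[OF sv _ that(2) r(2)] by blast
  qed
  have "outdeg F v = 1" if "v \<in> C" "v \<noteq> r" for v
  proof -
    have "outdeg F v \<noteq> 0" using root_unique[OF that(1)] that(2) by (auto simp: outdeg_eq_0_iff)
    moreover have "outdeg F v \<le> 1" using sv by (simp add: single_valued_iff_outdeg_le_1)
    ultimately show ?thesis by linarith
  qed
  then show ?thesis
    unfolding is_converging_tree_comp_def
  proof (intro ex1I conjI ballI impI)
    show "r \<in> C" "outdeg F r = 0" using \<open>r \<in> C\<close> r(2) by (simp_all add: outdeg_eq_0_iff)
  next
    fix r' assume "r' \<in> C \<and> outdeg F r' = 0 \<and> (\<forall>v\<in>C. v \<noteq> r' \<longrightarrow> outdeg F v = 1)"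
    then show "r' = r" using root_unique by (simp add: outdeg_eq_0_iff)
  qed
qed

lemma single_valued_trancl_cycle:
  assumes "single_valued F" "(x, x) \<in> F\<^sup>+" "(x, e) \<in> F\<^sup>*"
  shows "(e, e) \<in> F\<^sup>+"
  using assms(3)
proof (induction rule: rtrancl_induct)
  case (step e' e)
  obtain y where "(e', y) \<in> F" "(y, e') \<in> F\<^sup>*" using step.IH by (meson tranclD)
  with step.hyps(2) assms(1) have "(e, e') \<in> F\<^sup>*" by (auto dest: single_valuedD)
  with step.hyps(2) show ?case by (meson rtrancl_into_trancl1)
qed (use assms in simp)

lemma in_forest_imp_forest:
  fixes F :: "('v::finite \<times> 'v) set"
  assumes "in_forest w F"
  shows "forest F"
proof -
  have tree: "is_converging_tree_comp F (weak_rel F `` {v})" for v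
    using assms weak_class_in_components[of F v] by (simp add: in_forest_def)
  have self: "v \<in> weak_rel F `` {v}" for v
    using weak_rel_equiv by (metis UNIV_I equiv_class_self)
  have "outdeg F v \<le> 1" for v
  proof -
    obtain r where "outdeg F r = 0" "\<forall>u \<in> weak_rel F `` {v}. u \<noteq> r \<longrightarrow> outdeg F u = 1"
      using tree[of v] unfolding is_converging_tree_comp_def by blast
    then show ?thesis using self[of v] by (cases "v = r") auto
  qed
  then have sv: "single_valued F" by (simp add: single_valued_iff_outdeg_le_1)
  have "(x, x) \<notin> F\<^sup>+" for x
  proof
    assume cyc: "(x, x) \<in> F\<^sup>+"
    obtain r where r: "(x, r) \<in> weak_rel F" "r \<notin> Domain F"
      using tree[of x] unfolding is_converging_tree_comp_def by (auto simp: outdeg_eq_0_iff)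
    then obtain c where "(x, c) \<in> F\<^sup>*" "(r, c) \<in> F\<^sup>*"
      using weak_rel_common_successor[OF sv] by blast
    with r(2) have "(x, r) \<in> F\<^sup>*" by (simp add: Not_Domain_rtrancl)
    then have "(r, r) \<in> F\<^sup>+" by (rule single_valued_trancl_cycle[OF sv cyc])
    with r(2) show False by (meson Domain.DomainI tranclD)
  qed
  with sv show ?thesis by (simp add: forest_def acyclic_def)
qed

lemma in_forest_iff: "in_forest w (F :: ('v::finite \<times> 'v) set) \<longleftrightarrow> F \<subseteq> arcs w \<and> forest F"
  using in_forest_imp_forest[of w F] forest_converging_tree_comp[of F]
  by (auto simp: in_forest_def)

lemma card_forest: "single_valued F \<Longrightarrow> card F = card (Domain F)"
  by (metis card_image fst_eq_Domain inj_onI single_valuedD surjective_pairing)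

lemma card_weak_components_forest:
  fixes F :: "('v::finite \<times> 'v) set"
  assumes "forest F"
  shows "card (weak_components F) = CARD('v) - card F"
proof -
  have sv: "single_valued F" and ac: "acyclic F" using assms by (auto simp: forest_def)
  have "bij_betw (\<lambda>r. weak_rel F `` {r}) (UNIV - Domain F) (weak_components F)"
  proof (rule bij_betwI')
    fix r r' assume "r \<in> UNIV - Domain F" "r' \<in> UNIV - Domain F"
    moreover have "weak_rel F `` {r} = weak_rel F `` {r'} \<longleftrightarrow> (r, r') \<in> weak_rel F"
      by (rule eq_equiv_class_iff[OF weak_rel_equiv]) auto
    ultimately show "(weak_rel F `` {r} = weak_rel F `` {r'}) = (r = r')"
      using roots_weak_rel_eq[OF sv, of r r'] by (auto simp: weak_rel_def)
  next
    fix C assume "C \<in> weak_components F"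
    then obtain x where x: "C = weak_rel F `` {x}" by (rule weak_components_cases)
    obtain r where r: "(x, r) \<in> F\<^sup>*" "r \<notin> Domain F"
      using finite_acyclic_reaches_root[OF _ ac] by (auto simp: reaches_root_def)
    then have "C = weak_rel F `` {r}"
      using x rtrancl_weak_rel[OF r(1)] by (simp add: equiv_class_eq_iff[OF weak_rel_equiv])
    with r(2) show "\<exists>r \<in> UNIV - Domain F. C = weak_rel F `` {r}" by blast
  qed (rule weak_class_in_components)
  then have "card (weak_components F) = card (UNIV - Domain F)" by (simp add: bij_betw_same_card)
  also have "\<dots> = CARD('v) - card (Domain F)"
    by (rule card_Diff_subset) simp_all
  also have "\<dots> = CARD('v) - card F"
    by (simp only: card_forest[OF sv])
  finally show ?thesis .
qed

lemma in_tree_rooted_at_iff: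
  fixes F :: "('v::finite \<times> 'v) set"
  assumes "single_valued F"
  shows "in_tree_rooted_at F i j \<longleftrightarrow> reaches_root F i j"
proof
  assume "in_tree_rooted_at F i j"
  then have ij: "(i, j) \<in> weak_rel F" and root: "j \<notin> Domain F"
    by (auto simp: in_tree_rooted_at_def outdeg_eq_0_iff)
  obtain c where "(i, c) \<in> F\<^sup>*" "(j, c) \<in> F\<^sup>*"
    using weak_rel_common_successor[OF assms ij] by blast
  moreover from this(2) have "j = c" by (simp add: Not_Domain_rtrancl[OF root])
  ultimately show "reaches_root F i j" using root by (simp add: reaches_root_def)
next
  assume "reaches_root F i j"
  then have "(i, j) \<in> weak_rel F" "outdeg F j = 0"
    by (simp_all add: reaches_root_def rtrancl_weak_rel outdeg_eq_0_iff)
  then show "in_tree_rooted_at F i j" by (simp add: in_tree_rooted_at_def)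
qed

section \<open>Maximal in-forests and arc exchanges\<close>

definition max_forests :: "('v::finite \<Rightarrow> 'v \<Rightarrow> real) \<Rightarrow> ('v \<times> 'v) set set" where
  "max_forests w = {F. in_forest w F \<and> card F = CARD('v) - in_forest_dim w}"

lemma max_forestsD:
  assumes "F \<in> max_forests w"
  shows "single_valued F" "acyclic F" "F \<subseteq> arcs w"
  using assms by (auto simp: max_forests_def in_forest_iff forest_def)

lemma in_forest_empty: "in_forest (w :: 'v::finite \<Rightarrow> 'v \<Rightarrow> real) {}"
  by (simp add: in_forest_iff forest_def acyclic_def)

lemma in_forest_dim_le:
  fixes w :: "'v::finite \<Rightarrow> 'v \<Rightarrow> real"
  assumes "in_forest w F"
  shows "in_forest_dim w \<le> card (weak_components F)"
  unfolding in_forest_dim_def using assms by (intro Min_le) auto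

lemma in_forest_dim_attained:
  fixes w :: "'v::finite \<Rightarrow> 'v \<Rightarrow> real"
  shows "\<exists>F. in_forest w F \<and> card (weak_components F) = in_forest_dim w"
proof -
  have "in_forest_dim w \<in> {card (weak_components F) | F. in_forest w F}"
    unfolding in_forest_dim_def using in_forest_empty by (intro Min_in) auto
  then show ?thesis by auto
qed

lemma card_in_forest_le:
  fixes w :: "'v::finite \<Rightarrow> 'v \<Rightarrow> real"
  assumes "in_forest w G"
  shows "card G \<le> CARD('v) - in_forest_dim w"
proof -
  have "forest G" using assms by (simp add: in_forest_iff)
  then have "card G \<le> CARD('v)"
    using card_forest[of G] card_mono[of UNIV "Domain G"] by (simp add: forest_def)
  then show ?thesis
    using in_forest_dim_le[OF assms] card_weak_components_forest[OF \<open>forest G\<close>] by linarith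
qed

lemma max_forests_nonempty: "max_forests (w :: 'v::finite \<Rightarrow> 'v \<Rightarrow> real) \<noteq> {}"
proof -
  obtain F where F: "in_forest w F" "card (weak_components F) = in_forest_dim w"
    using in_forest_dim_attained by blast
  then have "card F \<le> CARD('v)"
    using card_in_forest_le[OF F(1)] by linarith
  then have "F \<in> max_forests w"
    using F card_weak_components_forest[of F] by (simp add: max_forests_def in_forest_iff)
  then show ?thesis by blast
qed

lemma max_forest_arc_from_root:
  assumes "F \<in> max_forests w" "a \<notin> Domain F" "0 < w a b"
  shows "(b, a) \<in> F\<^sup>*"
proof (rule ccontr)
  assume "(b, a) \<notin> F\<^sup>*"
  then have "in_forest w (insert (a, b) F)"
    using assms forest_insert[of F a b] by (auto simp: max_forests_def in_forest_iff arcs_def)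
  moreover have "card (insert (a, b) F) = Suc (card F)"
    using assms(2) by (auto intro: card_insert_disjoint)
  ultimately show False
    using card_in_forest_le assms(1) by (fastforce simp: max_forests_def)
qed

lemma max_forest_reaches_root_along_arc:
  assumes F: "F \<in> max_forests w" and "0 < w i k" and "i \<in> Domain F \<Longrightarrow> (k, i) \<in> F\<^sup>*"
  shows "reaches_root F k j \<longleftrightarrow> reaches_root F i j"
proof -
  have "(k, i) \<in> F\<^sup>*" using assms max_forest_arc_from_root[OF F _ \<open>0 < w i k\<close>] by blast
  then show ?thesis by (rule reaches_root_rtrancl_iff[OF max_forestsD(1)[OF F]])
qed

lemma max_forests_exchange:
  assumes "F \<in> max_forests w" "(v, u) \<in> F"
    and "a \<notin> Domain (F - {v} \<times> UNIV)" "(b, a) \<notin> (F - {v} \<times> UNIV)\<^sup>*" "0 < w a b"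
  shows "insert (a, b) (F - {v} \<times> UNIV) \<in> max_forests w"
proof -
  let ?H = "F - {v} \<times> UNIV"
  have F: "forest F" "F \<subseteq> arcs w" using assms(1) by (auto simp: max_forests_def in_forest_iff)
  then have "forest (insert (a, b) ?H)"
    using forest_subset[of F ?H] forest_insert[of ?H a b] assms(3,4) by blast
  moreover have "insert (a, b) ?H \<subseteq> arcs w" using F(2) assms(5) by (auto simp: arcs_def)
  moreover have "card (insert (a, b) ?H) = card F"
  proof -
    have "single_valued F" using F(1) by (simp add: forest_def)
    then have "F = insert (v, u) ?H" using assms(2) by (rule single_valued_insert_Diff_out_arcs)
    then have "card F = Suc (card ?H)"
      by (metis card_insert_disjoint finite mem_Sigma_iff Diff_iff singletonI UNIV_I)
    moreover have "(a, b) \<notin> ?H" using assms(3) by blast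
    ultimately show ?thesis by simp
  qed
  ultimately show ?thesis using assms(1) by (simp add: max_forests_def in_forest_iff)
qed

lemma sg_weight_exchange:
  fixes w :: "'v::finite \<Rightarrow> 'v \<Rightarrow> real"
  assumes "single_valued F" "(v, u) \<in> F" "(a, b) \<notin> F - {v} \<times> UNIV"
  shows "sg_weight w (insert (a, b) (F - {v} \<times> UNIV)) * w v u = sg_weight w F * w a b"
proof -
  have "F = insert (v, u) (F - {v} \<times> UNIV)"
    by (rule single_valued_insert_Diff_out_arcs[OF assms(1,2)])
  then have "sg_weight w F = w v u * sg_weight w (F - {v} \<times> UNIV)"
    unfolding sg_weight_def by (metis (no_types, lifting) case_prod_conv prod.insert finite
        mem_Sigma_iff Diff_iff singletonI UNIV_I)
  with assms(3) show ?thesis by (simp add: sg_weight_def)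
qed

lemma max_forests_reroute:
  assumes F: "F \<in> max_forests w" and im: "(i, m) \<in> F" and ki: "(k, i) \<notin> F\<^sup>*" and wik: "0 < w i k"
  defines "G \<equiv> insert (i, k) (F - {i} \<times> UNIV)"
  shows "G \<in> max_forests w" "(i, k) \<in> G" "(m, i) \<notin> G\<^sup>*"
    "insert (i, m) (G - {i} \<times> UNIV) = F"
    "reaches_root G i j \<longleftrightarrow> reaches_root F k j"
    "sg_weight w G * w i m = sg_weight w F * w i k"
proof -
  let ?H = "F - {i} \<times> UNIV"
  note sv = max_forestsD(1)[OF F] and ac = max_forestsD(2)[OF F]
  have HF: "F = insert (i, m) ?H" using single_valued_insert_Diff_out_arcs[OF sv im] .
  have kiH: "(k, i) \<notin> ?H\<^sup>*" using ki rtrancl_mono[of ?H F] by blast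
  show "G \<in> max_forests w"
    unfolding G_def using max_forests_exchange[OF F im _ kiH wik] by blast
  show "(i, k) \<in> G" by (simp add: G_def)
  have "(m, i) \<notin> ?H\<^sup>*"
  proof
    assume "(m, i) \<in> ?H\<^sup>*"
    then have "(m, i) \<in> F\<^sup>*" using rtrancl_mono[of ?H F] by blast
    with im ac show False by (meson acyclic_def rtrancl_into_trancl2)
  qed
  then show "(m, i) \<notin> G\<^sup>*" by (simp add: G_def rtrancl_insert)
  show "insert (i, m) (G - {i} \<times> UNIV) = F"
    using HF by (auto simp: G_def)
  have "reaches_root G i j \<longleftrightarrow> reaches_root ?H k j"
    unfolding G_def by (rule reaches_root_insert_root_arc) (use kiH in auto)
  also have "\<dots> \<longleftrightarrow> reaches_root F k j"
    using reaches_root_insert_unreached[OF kiH, of m j] HF by simp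
  finally show "reaches_root G i j \<longleftrightarrow> reaches_root F k j" .
  show "sg_weight w G * w i m = sg_weight w F * w i k"
    unfolding G_def by (rule sg_weight_exchange[OF sv im]) simp
qed

definition pred_on_path :: "'v rel \<Rightarrow> 'v \<Rightarrow> 'v \<Rightarrow> 'v" where
  "pred_on_path G m j = (THE k. (m, k) \<in> G\<^sup>* \<and> (k, j) \<in> G)"

lemma pred_on_path_eq:
  assumes sv: "single_valued G" and j: "j \<notin> Domain G" and "(m, k) \<in> G\<^sup>*" "(k, j) \<in> G"
  shows "pred_on_path G m j = k"
  unfolding pred_on_path_def
proof (rule the_equality)
  fix k' assume k': "(m, k') \<in> G\<^sup>* \<and> (k', j) \<in> G"
  have succ_root: "False" if "(x, j) \<in> G" "(x, y) \<in> G\<^sup>*" "x \<noteq> y" "(y, j) \<in> G" for x y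
    using single_valued_rtrancl_succ[OF sv that(1-3)] that(4) j Not_Domain_rtrancl
      by (metis Domain.DomainI)
  show "k' = k"
    using single_valued_confluent[OF sv \<open>(m, k) \<in> G\<^sup>*\<close>, of k'] k' succ_root \<open>(k, j) \<in> G\<close> by metis
qed (use assms in blast)

lemma max_forest_pred_on_path:
  assumes G: "G \<in> max_forests w" and j: "j \<notin> Domain G" and "0 < w j m" "m \<noteq> j"
  shows "(m, pred_on_path G m j) \<in> G\<^sup>*" "(pred_on_path G m j, j) \<in> G"
proof -
  note sv = max_forestsD(1)[OF G]
  have "(m, j) \<in> G\<^sup>*" using max_forest_arc_from_root[OF G j \<open>0 < w j m\<close>] .
  then obtain k where "(m, k) \<in> G\<^sup>*" "(k, j) \<in> G"
    using \<open>m \<noteq> j\<close> by (meson rtranclD tranclD2)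
  moreover from this have "pred_on_path G m j = k" by (intro pred_on_path_eq[OF sv j])
  ultimately show "(m, pred_on_path G m j) \<in> G\<^sup>*" "(pred_on_path G m j, j) \<in> G" by auto
qed

lemma max_forests_graft_forward:
  assumes F: "F \<in> max_forests w" and ik: "reaches_root F i k" and wkj: "0 < w k j" and "k \<noteq> j"
  defines "m \<equiv> parent F j" and "G \<equiv> insert (k, j) (F - {j} \<times> UNIV)"
  shows "G \<in> max_forests w" "reaches_root G i j" "0 < w j m"
    "pred_on_path G m j = k" "insert (j, m) (G - {k} \<times> UNIV) = F"
    "sg_weight w G * w j m = sg_weight w F * w k j"
proof -
  let ?H = "F - {j} \<times> UNIV"
  note sv = max_forestsD(1)[OF F] and ac = max_forestsD(2)[OF F] and arcs = max_forestsD(3)[OF F]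
  have k: "k \<notin> Domain F" "(i, k) \<in> F\<^sup>*" using ik by (auto simp: reaches_root_def)
  have jk: "(j, k) \<in> F\<^sup>*" by (rule max_forest_arc_from_root[OF F k(1) wkj])
  then have "j \<in> Domain F" using \<open>k \<noteq> j\<close> Not_Domain_rtrancl[of j F k] by blast
  then have jm: "(j, m) \<in> F" unfolding m_def by (rule parent_in[OF sv])
  then show "0 < w j m" using arcs by (auto simp: arcs_def)
  have HF: "F = insert (j, m) ?H" by (rule single_valued_insert_Diff_out_arcs[OF sv jm])
  have kH: "k \<notin> Domain ?H" and jH: "j \<notin> Domain ?H" using k(1) by auto
  have jkH: "(j, k) \<notin> ?H\<^sup>*" using jH \<open>k \<noteq> j\<close> by (simp add: Not_Domain_rtrancl)
  show G: "G \<in> max_forests w"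
    unfolding G_def by (rule max_forests_exchange[OF F jm kH jkH wkj])
  have jG: "j \<notin> Domain G" using jH \<open>k \<noteq> j\<close> by (auto simp: G_def)
  have "(i, j) \<in> ?H\<^sup>* \<or> (i, k) \<in> ?H\<^sup>*"
    using rtrancl_Diff_out_arcs_to[of i j F] rtrancl_Diff_out_arcs_avoiding[OF k(2)] by blast
  then have "(i, j) \<in> G\<^sup>*" by (auto simp: G_def rtrancl_insert)
  with jG show "reaches_root G i j" by (simp add: reaches_root_def)
  have "(m, k) \<in> F\<^sup>*" by (rule single_valued_rtrancl_succ[OF sv jm jk \<open>k \<noteq> j\<close>[symmetric]])
  moreover have "(m, j) \<notin> F\<^sup>*" using jm ac by (meson acyclic_def rtrancl_into_trancl2)
  ultimately have "(m, k) \<in> G\<^sup>*"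
    using rtrancl_Diff_out_arcs_avoiding[of m k F j] by (auto simp: G_def rtrancl_insert)
  moreover note max_forestsD(1)[OF G]
  ultimately show "pred_on_path G m j = k" using jG by (intro pred_on_path_eq) (auto simp: G_def)
  show "insert (j, m) (G - {k} \<times> UNIV) = F"
    using HF kH \<open>k \<noteq> j\<close> by (auto simp: G_def)
  show "sg_weight w G * w j m = sg_weight w F * w k j"
    unfolding G_def using kH by (intro sg_weight_exchange[OF sv jm]) auto
qed

lemma max_forests_graft_backward:
  assumes G: "G \<in> max_forests w" and ij: "reaches_root G i j" and wjm: "0 < w j m"
    and mk: "(m, k) \<in> G\<^sup>*" and kj: "(k, j) \<in> G"
  defines "F \<equiv> insert (j, m) (G - {k} \<times> UNIV)"
  shows "F \<in> max_forests w" "reaches_root F i k" "0 < w k j"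
    "parent F j = m" "insert (k, j) (F - {j} \<times> UNIV) = G"
proof -
  let ?H = "G - {k} \<times> UNIV"
  note sv = max_forestsD(1)[OF G] and arcs = max_forestsD(3)[OF G]
  have j: "j \<notin> Domain G" "(i, j) \<in> G\<^sup>*" using ij by (auto simp: reaches_root_def)
  show "0 < w k j" using kj arcs by (auto simp: arcs_def)
  have "k \<noteq> j" using kj j(1) by blast
  have HG: "G = insert (k, j) ?H" by (rule single_valued_insert_Diff_out_arcs[OF sv kj])
  have jH: "j \<notin> Domain ?H" and kH: "k \<notin> Domain ?H" using j(1) by auto
  have mkH: "(m, k) \<in> ?H\<^sup>*" by (rule rtrancl_Diff_out_arcs_to[OF mk])
  have "(m, j) \<notin> ?H\<^sup>*"
  proof
    assume "(m, j) \<in> ?H\<^sup>*"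
    then have "k = j"
      using reaches_root_unique[of ?H m k j] single_valued_subset[OF _ sv] mkH jH kH
      by (auto simp: reaches_root_def)
    with \<open>k \<noteq> j\<close> show False ..
  qed
  show F: "F \<in> max_forests w"
    unfolding F_def by (rule max_forests_exchange[OF G kj jH \<open>(m, j) \<notin> ?H\<^sup>*\<close> wjm])
  have "k \<notin> Domain F" using kH \<open>k \<noteq> j\<close> by (auto simp: F_def)
  moreover have "(i, k) \<in> ?H\<^sup>* \<or> (i, j) \<in> ?H\<^sup>*"
    using rtrancl_Diff_out_arcs_to[of i k G] rtrancl_Diff_out_arcs_avoiding[OF j(2)] by blast
  then have "(i, k) \<in> F\<^sup>*" using mkH by (auto simp: F_def rtrancl_insert)
  ultimately show "reaches_root F i k" by (simp add: reaches_root_def)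
  from max_forestsD(1)[OF F] show "parent F j = m" by (rule parent_eq) (simp add: F_def)
  show "insert (k, j) (F - {j} \<times> UNIV) = G"
    using HG jH by (auto simp: F_def)
qed

section \<open>The forest matrix and the Laplacian\<close>

lemma sg_weight_pos: "F \<subseteq> arcs w \<Longrightarrow> 0 < sg_weight w F"
  unfolding sg_weight_def by (rule prod_pos) (auto simp: arcs_def)

lemma sigma_k_max_forests:
  fixes w :: "'v::finite \<Rightarrow> 'v \<Rightarrow> real"
  shows "sigma_k w (CARD('v) - in_forest_dim w) = (\<Sum>F \<in> max_forests w. sg_weight w F)"
  by (simp add: sigma_k_def max_forests_def)

lemma Q_k_max_forests:
  fixes w :: "'v::finite \<Rightarrow> 'v \<Rightarrow> real"
  shows "Q_k w (CARD('v) - in_forest_dim w) $ i $ j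
    = (\<Sum>F \<in> max_forests w. if reaches_root F i j then sg_weight w F else 0)"
proof -
  have "{F. in_forest w F \<and> card F = CARD('v) - in_forest_dim w \<and> in_tree_rooted_at F i j}
      = {F \<in> max_forests w. reaches_root F i j}"
    using in_tree_rooted_at_iff
    by (auto simp: max_forests_def in_forest_iff forest_def)
  then show ?thesis by (simp add: Q_k_def sum.inter_filter)
qed

lemma sigma_k_max_forests_pos:
  fixes w :: "'v::finite \<Rightarrow> 'v \<Rightarrow> real"
  shows "0 < sigma_k w (CARD('v) - in_forest_dim w)"
  unfolding sigma_k_max_forests using max_forests_nonempty[of w]
  by (intro sum_pos) (auto simp: max_forests_def in_forest_iff sg_weight_pos)

lemma Q_k_max_forests_row_sum:
  fixes w :: "'v::finite \<Rightarrow> 'v \<Rightarrow> real"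
  shows "(\<Sum>j\<in>UNIV. Q_k w (CARD('v) - in_forest_dim w) $ i $ j)
    = sigma_k w (CARD('v) - in_forest_dim w)"
proof -
  have "(\<Sum>j\<in>UNIV. if reaches_root F i j then sg_weight w F else 0) = sg_weight w F"
    if F: "F \<in> max_forests w" for F
  proof -
    obtain r where "reaches_root F i r"
      using finite_acyclic_reaches_root[OF finite max_forestsD(2)[OF F]] by blast
    then have "reaches_root F i j \<longleftrightarrow> j = r" for j
      using reaches_root_unique[OF max_forestsD(1)[OF F]] by blast
    then show ?thesis by simp
  qed
  then show ?thesis
    unfolding Q_k_max_forests sigma_k_max_forests by (subst sum.swap) simp
qed

lemma Q_k_max_forests_nonzero:
  fixes w :: "'v::finite \<Rightarrow> 'v \<Rightarrow> real"
  assumes "Q_k w (CARD('v) - in_forest_dim w) $ i $ j \<noteq> 0"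
  shows "(i, j) \<in> (arcs w)\<^sup>*"
proof -
  obtain F where "F \<in> max_forests w" "reaches_root F i j"
    using assms sum.neutral by (force simp: Q_k_max_forests)
  then show ?thesis
    using rtrancl_mono[OF max_forestsD(3)] by (auto simp: reaches_root_def)
qed

lemma sum_mult_sum_if:
  fixes c :: "'k::finite \<Rightarrow> real"
  assumes "finite M"
  shows "(\<Sum>k\<in>UNIV. c k * (\<Sum>F\<in>M. if P F k then a F else 0))
    = (\<Sum>(F, k) \<in> M \<times> UNIV. if P F k then a F * c k else 0)"
proof -
  have "(\<Sum>k\<in>UNIV. c k * (\<Sum>F\<in>M. if P F k then a F else 0))
      = (\<Sum>k\<in>UNIV. \<Sum>F\<in>M. if P F k then a F * c k else 0)"
    by (auto simp: sum_distrib_left mult.commute intro!: sum.cong)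
  also have "\<dots> = (\<Sum>F\<in>M. \<Sum>k\<in>UNIV. if P F k then a F * c k else 0)"
    by (rule sum.swap)
  also have "\<dots> = (\<Sum>(F, k) \<in> M \<times> UNIV. if P F k then a F * c k else 0)"
    using assms by (simp add: sum.cartesian_product)
  finally show ?thesis .
qed

lemma laplacian_row_sum:
  "(\<Sum>k\<in>UNIV. laplacian w $ i $ k * x k) = (\<Sum>k\<in>UNIV. w i k * (x i - x k))"
proof -
  have "(\<Sum>k\<in>UNIV. laplacian w $ i $ k * x k)
      = laplacian w $ i $ i * x i + (\<Sum>k\<in>UNIV - {i}. laplacian w $ i $ k * x k)"
    by (simp add: sum.remove)
  also have "\<dots> = (\<Sum>k\<in>UNIV - {i}. w i k * (x i - x k))"
    by (simp add: laplacian_def sum_distrib_left sum_subtractf sum_negf algebra_simps)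
  also have "\<dots> = (\<Sum>k\<in>UNIV. w i k * (x i - x k))"
    by (simp add: sum.remove[of UNIV i])
  finally show ?thesis .
qed

lemma laplacian_column_sum:
  "(\<Sum>k\<in>UNIV. x k * laplacian w $ k $ j) = (\<Sum>k\<in>UNIV. x j * w j k - x k * w k j)"
proof -
  have "(\<Sum>k\<in>UNIV. x k * laplacian w $ k $ j)
      = x j * laplacian w $ j $ j + (\<Sum>k\<in>UNIV - {j}. x k * laplacian w $ k $ j)"
    by (simp add: sum.remove)
  also have "\<dots> = (\<Sum>k\<in>UNIV - {j}. x j * w j k - x k * w k j)"
    by (simp add: laplacian_def sum_distrib_left sum_subtractf sum_negf)
  also have "\<dots> = (\<Sum>k\<in>UNIV. x j * w j k - x k * w k j)"
    by (simp add: sum.remove[of UNIV j])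
  finally show ?thesis .
qed

lemma laplacian_mult_vec: "(laplacian w *v x) $ i = (\<Sum>k\<in>UNIV. w i k * (x $ i - x $ k))"
  using laplacian_row_sum[of w i "\<lambda>k. x $ k"] by (simp add: matrix_vector_mult_def)

lemma laplacian_mult_left: "(laplacian w ** A) $ i $ j = (\<Sum>k\<in>UNIV. w i k * (A $ i $ j - A $ k $ j))"
  using laplacian_row_sum[of w i "\<lambda>k. A $ k $ j"] by (simp add: matrix_matrix_mult_def)

lemma laplacian_mult_right:
  "(A ** laplacian w) $ i $ j = (\<Sum>k\<in>UNIV. A $ i $ j * w j k - A $ i $ k * w k j)"
  using laplacian_column_sum[of "\<lambda>k. A $ i $ k" w j] by (simp add: matrix_matrix_mult_def)

lemma matrix_vector_mult_uminus_right: "(A :: real^'n^'m) *v (- x) = - (A *v x)"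
  by (simp add: matrix_vector_mult_def vec_eq_iff sum_negf)

locale nonneg_loopfree_weights =
  fixes w :: "'v::finite \<Rightarrow> 'v \<Rightarrow> real"
  assumes nonneg: "0 \<le> w i j"
    and loopfree: "w i i = 0"
begin

lemma sum_if_eq_sum_pos_weight:
  assumes "finite S"
  shows "(\<Sum>x\<in>S. if P x then f x * w (a x) (b x) else 0)
    = (\<Sum>x \<in> {x \<in> S. P x \<and> 0 < w (a x) (b x)}. f x * w (a x) (b x))"
proof -
  have "w (a x) (b x) = 0 \<or> 0 < w (a x) (b x)" for x using nonneg[of "a x" "b x"] by linarith
  then have "(if P x then f x * w (a x) (b x) else 0)
      = (if P x \<and> 0 < w (a x) (b x) then f x * w (a x) (b x) else 0)" for x
    by (metis mult_zero_right)
  then show ?thesis using assms by (simp add: sum.inter_filter)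
qed

(* If k reaches i, both summands agree; otherwise redirecting the out-arc of i to k is an
   involution of the remaining pairs that exchanges them. *)
lemma sum_reroute_out_arc:
  "(\<Sum>(F, k) \<in> max_forests w \<times> UNIV. if reaches_root F k j then sg_weight w F * w i k else 0)
   = (\<Sum>(F, k) \<in> max_forests w \<times> UNIV. if reaches_root F i j then sg_weight w F * w i k else 0)"
  (is "sum ?f ?S = sum ?g ?S")
proof -
  define T where "T = {(F, k) \<in> ?S. i \<in> Domain F \<and> (k, i) \<notin> F\<^sup>* \<and> 0 < w i k}"
  define \<Phi> where "\<Phi> = (\<lambda>(F, k). (insert (i, k) (F - {i} \<times> UNIV), parent F i))"
  have "?f x = ?g x" if xST: "x \<in> ?S - T" for x
  proof -
    obtain F k where x: "x = (F, k)" "F \<in> max_forests w" using xST by blast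
    show ?thesis
    proof (cases "0 < w i k")
      case True
      then show ?thesis
        using max_forest_reaches_root_along_arc[OF x(2) True] xST x(1) by (auto simp: T_def)
    next
      case False
      then have "w i k = 0" using nonneg[of i k] by linarith
      then show ?thesis using x(1) by simp
    qed
  qed
  then have "sum ?f (?S - T) = sum ?g (?S - T)" by (rule sum.cong[OF refl])
  moreover have "\<Phi> (\<Phi> x) = x \<and> \<Phi> x \<in> T \<and> ?g (\<Phi> x) = ?f x" if xT: "x \<in> T" for x
  proof -
    obtain F k where x: "x = (F, k)" "F \<in> max_forests w" "i \<in> Domain F" "(k, i) \<notin> F\<^sup>*" "0 < w i k"
      using xT by (auto simp: T_def)
    note sv = max_forestsD(1)[OF x(2)]
    have im: "(i, parent F i) \<in> F" by (rule parent_in[OF sv x(3)])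
    note G = max_forests_reroute[OF x(2) im x(4,5)]
    from max_forestsD(1)[OF G(1)] have "parent (insert (i, k) (F - {i} \<times> UNIV)) i = k" using G(2)
      by (rule parent_eq)
    moreover have "0 < w i (parent F i)"
      using max_forestsD(3)[OF x(2)] im by (auto simp: arcs_def)
    ultimately show ?thesis
      using G x(1) by (auto simp: \<Phi>_def T_def mult.commute)
  qed
  then have "sum ?f T = sum ?g T"
    by (intro sum.reindex_bij_witness[of T \<Phi> \<Phi>]) blast+
  moreover have "T \<subseteq> ?S" by (auto simp: T_def)
  ultimately show ?thesis using sum.subset_diff[of T ?S ?f] sum.subset_diff[of T ?S ?g] by simp
qed

(* graft cuts the out-arc (j, m) and hangs the root k of the tree of i below j; ungraft
   undoes this, recovering k as the last vertex before j on the path from m. *)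
lemma sum_graft_root:
  "(\<Sum>(F, k) \<in> max_forests w \<times> UNIV. if reaches_root F i k then sg_weight w F * w k j else 0)
   = (\<Sum>(G, m) \<in> max_forests w \<times> UNIV. if reaches_root G i j then sg_weight w G * w j m else 0)"
proof -
  let ?S = "max_forests w \<times> UNIV"
  define B where "B = {(F, k) \<in> ?S. reaches_root F i k \<and> 0 < w k j}"
  define A where "A = {(G, m) \<in> ?S. reaches_root G i j \<and> 0 < w j m}"
  define graft where "graft = (\<lambda>(F, k). (insert (k, j) (F - {j} \<times> UNIV), parent F j))"
  define ungraft where
    "ungraft = (\<lambda>(G, m). let k = pred_on_path G m j in (insert (j, m) (G - {k} \<times> UNIV), k))"
  have "ungraft (graft x) = x \<and> graft x \<in> A \<and> (case graft x of (G, m) \<Rightarrow> sg_weight w G * w j m)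
      = (case x of (F, k) \<Rightarrow> sg_weight w F * w k j)" if x: "x \<in> B" for x
  proof -
    obtain F k where "x = (F, k)" "F \<in> max_forests w" "reaches_root F i k" "0 < w k j"
      using x by (auto simp: B_def)
    moreover from this have "k \<noteq> j" using loopfree[of j] by auto
    ultimately show ?thesis
      using max_forests_graft_forward[of F w i k j] by (auto simp: ungraft_def graft_def Let_def A_def)
  qed
  moreover have "graft (ungraft y) = y \<and> ungraft y \<in> B" if y: "y \<in> A" for y
  proof -
    obtain G m where y: "y = (G, m)" "G \<in> max_forests w" "reaches_root G i j" "0 < w j m"
      using y by (auto simp: A_def)
    moreover from this have "m \<noteq> j" using loopfree[of j] by auto
    moreover note pred = max_forest_pred_on_path[OF y(2) _ y(4) this]
    ultimately show ?thesis
      using max_forests_graft_backward[OF y(2,3,4) pred]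
        by (auto simp: ungraft_def graft_def Let_def B_def reaches_root_def)
  qed
  ultimately have "(\<Sum>(F, k) \<in> B. sg_weight w F * w k j) = (\<Sum>(G, m) \<in> A. sg_weight w G * w j m)"
    by (intro sum.reindex_bij_witness[of B ungraft graft A]) blast+
  then show ?thesis
    using sum_if_eq_sum_pos_weight[of ?S "\<lambda>x. reaches_root (fst x) i (snd x)"
        "\<lambda>x. sg_weight w (fst x)" snd "\<lambda>_. j"]
      sum_if_eq_sum_pos_weight[of ?S "\<lambda>x. reaches_root (fst x) i j"
        "\<lambda>x. sg_weight w (fst x)" "\<lambda>_. j" snd]
    by (simp add: A_def B_def split_def mem_Times_iff)
qed

lemma laplacian_mult_Q_k:
  "laplacian w ** Q_k w (CARD('v) - in_forest_dim w) = 0"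
proof -
  let ?Q = "Q_k w (CARD('v) - in_forest_dim w)"
  have "(laplacian w ** ?Q) $ i $ j = 0" for i j
  proof -
    have "(laplacian w ** ?Q) $ i $ j
        = (\<Sum>k\<in>UNIV. w i k * ?Q $ i $ j) - (\<Sum>k\<in>UNIV. w i k * ?Q $ k $ j)"
      by (simp add: laplacian_mult_left right_diff_distrib sum_subtractf)
    also have "\<dots> = 0"
      unfolding Q_k_max_forests sum_mult_sum_if[OF finite] using sum_reroute_out_arc[of j i] by simp
    finally show ?thesis .
  qed
  then show ?thesis by (simp add: vec_eq_iff)
qed

lemma Q_k_mult_laplacian:
  "Q_k w (CARD('v) - in_forest_dim w) ** laplacian w = 0"
proof -
  let ?Q = "Q_k w (CARD('v) - in_forest_dim w)"
  have "(?Q ** laplacian w) $ i $ j = 0" for i j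
  proof -
    have "(?Q ** laplacian w) $ i $ j
        = (\<Sum>k\<in>UNIV. w j k * ?Q $ i $ j) - (\<Sum>k\<in>UNIV. w k j * ?Q $ i $ k)"
      by (simp add: laplacian_mult_right sum_subtractf mult.commute)
    also have "\<dots> = 0"
      unfolding Q_k_max_forests sum_mult_sum_if[OF finite] using sum_graft_root[of i j] by simp
    finally show ?thesis .
  qed
  then show ?thesis by (simp add: vec_eq_iff)
qed

lemma harmonic_max_propagates:
  assumes harmonic: "\<And>u. (\<Sum>k\<in>UNIV. w u k * (x u - x k)) = 0"
    and max: "\<And>v. (a, v) \<in> (arcs w)\<^sup>* \<Longrightarrow> x v \<le> x a"
    and "(a, v) \<in> (arcs w)\<^sup>*"
  shows "x v = x a"
  using \<open>(a, v) \<in> (arcs w)\<^sup>*\<close>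
proof (induction rule: rtrancl_induct)
  case (step u v)
  have "0 \<le> w u k * (x u - x k)" for k
  proof (cases "0 < w u k")
    case True
    then have "(a, k) \<in> (arcs w)\<^sup>*" using step.hyps(1) by (simp add: arcs_def rtrancl_into_rtrancl)
    then show ?thesis using max step.IH True by fastforce
  qed (use nonneg[of u k] in simp)
  then have "w u v * (x u - x v) = 0"
    using sum_nonneg_eq_0_iff[of UNIV "\<lambda>k. w u k * (x u - x k)"] harmonic[of u] by simp
  moreover have "0 < w u v" using step.hyps(2) by (simp add: arcs_def)
  ultimately show ?case using step.IH by simp
qed simp

(* z = y - J y is harmonic.  Let a maximise z and b maximise y among the vertices reachable
   from a.  Then y is constant on the vertices reachable from b, which carry row b of J, so
   z b = 0; and z is constant on the vertices reachable from a, so max z = z b = 0. *)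
lemma laplacian_kernel_le_fixed:
  fixes J :: "real^'v^'v"
  assumes LJ: "laplacian w ** J = 0"
    and rows: "\<And>i. (\<Sum>j\<in>UNIV. J $ i $ j) = 1"
    and supp: "\<And>i j. J $ i $ j \<noteq> 0 \<Longrightarrow> (i, j) \<in> (arcs w)\<^sup>*"
    and y: "laplacian w *v y = 0"
  shows "y $ i \<le> (J *v y) $ i"
proof -
  define z where "z = y - J *v y"
  have "laplacian w *v z = 0"
    by (simp add: z_def matrix_vector_mult_diff_distrib y matrix_vector_mul_assoc LJ)
  then have z_harmonic: "(\<Sum>k\<in>UNIV. w u k * (z $ u - z $ k)) = 0" for u
    using laplacian_mult_vec[of w z u] by simp
  have y_harmonic: "(\<Sum>k\<in>UNIV. w u k * (y $ u - y $ k)) = 0" for u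
    using laplacian_mult_vec[of w y u] y by simp
  have "Max (range (\<lambda>v. z $ v)) \<in> range (\<lambda>v. z $ v)" by (rule Max_in) auto
  then obtain a where "Max (range (\<lambda>v. z $ v)) = z $ a" by blast
  then have a: "z $ v \<le> z $ a" for v using Max_ge[of "range (\<lambda>v. z $ v)" "z $ v"] by simp
  define R where "R = {v. (a, v) \<in> (arcs w)\<^sup>*}"
  have "a \<in> R" by (simp add: R_def)
  then have "Max ((\<lambda>v. y $ v) ` R) \<in> (\<lambda>v. y $ v) ` R" by (intro Max_in) auto
  then obtain b where b: "b \<in> R" "Max ((\<lambda>v. y $ v) ` R) = y $ b" by blast
  then have b_max: "y $ v \<le> y $ b" if "v \<in> R" for v
    using that Max_ge[of "(\<lambda>v. y $ v) ` R" "y $ v"] by simp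
  have b_max': "y $ v \<le> y $ b" if "(b, v) \<in> (arcs w)\<^sup>*" for v
    using b(1) that b_max rtrancl_trans[of a b "arcs w" v] by (simp add: R_def)
  have y_const: "y $ v = y $ b" if "(b, v) \<in> (arcs w)\<^sup>*" for v
    using harmonic_max_propagates[of "\<lambda>v. y $ v", OF y_harmonic b_max' that] .
  have "(J *v y) $ b = (\<Sum>j\<in>UNIV. J $ b $ j * y $ j)" by (simp add: matrix_vector_mult_def)
  also have "\<dots> = (\<Sum>j\<in>UNIV. J $ b $ j * y $ b)"
  proof (rule sum.cong[OF refl])
    fix j show "J $ b $ j * y $ j = J $ b $ j * y $ b"
      using supp[of b j] y_const[of j] by (cases "J $ b $ j = 0") auto
  qed
  also have "\<dots> = y $ b" by (simp add: rows flip: sum_distrib_right)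
  finally have "z $ b = 0" by (simp add: z_def)
  moreover have "z $ b = z $ a"
    using harmonic_max_propagates[of "\<lambda>v. z $ v" a b] z_harmonic a b(1) by (simp add: R_def)
  ultimately show ?thesis using a[of i] by (simp add: z_def)
qed

lemma laplacian_kernel_fixed:
  fixes J :: "real^'v^'v"
  assumes "laplacian w ** J = 0"
    and "\<And>i. (\<Sum>j\<in>UNIV. J $ i $ j) = 1"
    and "\<And>i j. J $ i $ j \<noteq> 0 \<Longrightarrow> (i, j) \<in> (arcs w)\<^sup>*"
    and y: "laplacian w *v y = 0"
  shows "J *v y = y"
proof -
  have "laplacian w *v (- y) = 0" using y by (simp add: matrix_vector_mult_uminus_right)
  then have "(J *v y) $ i \<le> y $ i" for i
    using laplacian_kernel_le_fixed[OF assms(1-3), of "- y" i]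
      by (simp add: matrix_vector_mult_uminus_right)
  then show ?thesis
    using laplacian_kernel_le_fixed[OF assms] by (simp add: vec_eq_iff order_antisym)
qed

end

section \<open>Group inverses from kernel projections\<close>

lemma matrix_add_rdistrib: "((A :: 'a::semiring_1^'n^'m) + B) ** C = A ** C + B ** C"
  by (simp add: matrix_matrix_mult_def vec_eq_iff sum.distrib distrib_right)

lemma matrix_diff_ldistrib: "(A :: 'a::ring_1^'n^'m) ** (B - C) = A ** B - A ** C"
  by (simp add: matrix_matrix_mult_def vec_eq_iff sum_subtractf right_diff_distrib)

lemma matrix_diff_rdistrib: "((A :: 'a::ring_1^'n^'m) - B) ** C = A ** C - B ** C"
  by (simp add: matrix_matrix_mult_def vec_eq_iff sum_subtractf left_diff_distrib)

locale kernel_projection =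
  fixes L J :: "real^'n^'n"
  assumes LJ: "L ** J = 0" and JL: "J ** L = 0"
    and fixes_kernel: "\<And>y. L *v y = 0 \<Longrightarrow> J *v y = y"
begin

lemma idempotent: "J ** J = J"
proof (subst matrix_eq, intro allI)
  fix x
  have "L *v (J *v x) = 0" by (simp add: matrix_vector_mul_assoc LJ)
  then show "(J ** J) *v x = J *v x" by (simp add: fixes_kernel flip: matrix_vector_mul_assoc)
qed

lemma invertible_add: "invertible (L + J)"
proof -
  have "x = 0" if "(L + J) *v x = 0" for x
  proof -
    have "J *v x = J *v ((L + J) *v x)"
      by (simp add: matrix_vector_mul_assoc matrix_add_ldistrib JL idempotent)
    then have "J *v x = 0" using that by simp
    moreover from this have "L *v x = 0" using that by (simp add: matrix_vector_mult_add_rdistrib)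
    ultimately show ?thesis using fixes_kernel by metis
  qed
  then show ?thesis by (simp add: invertible_left_inverse matrix_left_invertible_ker)
qed

lemma group_inverse_exists: "\<exists>X. is_group_inverse L X"
proof -
  obtain B where MB: "(L + J) ** B = mat 1" and BM: "B ** (L + J) = mat 1"
    using invertible_add by (auto simp: invertible_def)
  have "J ** B = J"
    by (metis MB JL idempotent matrix_add_ldistrib add_0 matrix_mul_assoc matrix_mul_rid)
  moreover have "B ** J = J"
    by (metis BM LJ idempotent matrix_add_rdistrib add_0 matrix_mul_assoc matrix_mul_lid)
  moreover have "L ** B = mat 1 - J"
    using MB \<open>J ** B = J\<close> by (simp add: matrix_add_rdistrib algebra_simps)
  moreover have "B ** L = mat 1 - J"
    using BM \<open>B ** J = J\<close> by (simp add: matrix_add_ldistrib algebra_simps)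
  ultimately have "is_group_inverse L (B - J)"
    unfolding is_group_inverse_def
    by (simp add: matrix_diff_ldistrib matrix_diff_rdistrib LJ JL idempotent flip: matrix_mul_assoc)
  then show ?thesis ..
qed

lemma eq_complement_of_group_inverse:
  assumes "is_group_inverse L X"
  shows "J = mat 1 - L ** X"
proof -
  have LXL: "L ** X ** L = L" and comm: "L ** X = X ** L"
    using assms by (auto simp: is_group_inverse_def)
  obtain B where MB: "(L + J) ** B = mat 1" using invertible_add by (auto simp: invertible_def)
  have "L ** X ** J = 0" by (simp add: comm LJ flip: matrix_mul_assoc)
  then have "(mat 1 - L ** X - J) ** (L + J) = 0"
    by (simp add: matrix_diff_rdistrib matrix_add_ldistrib LXL JL idempotent)
  then have "(mat 1 - L ** X - J) ** ((L + J) ** B) = 0" by (simp add: matrix_mul_assoc)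
  then show ?thesis by (simp add: MB)
qed

end

theorem proposition14:
  fixes w :: "'v::finite \<Rightarrow> 'v \<Rightarrow> real"
  assumes "CARD('v) > 1"
    and "\<forall>i j. w i j \<ge> 0"
    and "\<forall>i. w i i = 0"
  defines "n \<equiv> CARD('v)"
    and "d \<equiv> in_forest_dim w"
  shows "(\<exists>X. is_group_inverse (laplacian w) X)
    \<and> (\<forall>X. is_group_inverse (laplacian w) X \<longrightarrow>
         (1 / sigma_k w (n - d)) *\<^sub>R Q_k w (n - d) = mat 1 - laplacian w ** X)"
proof -
  interpret nonneg_loopfree_weights w
    using assms(2,3) by unfold_locales auto
  define J where "J = (1 / sigma_k w (n - d)) *\<^sub>R Q_k w (n - d)"
  have "laplacian w ** J = 0"
    using laplacian_mult_Q_k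
      by (simp add: J_def n_def d_def matrix_scalar_ac flip: scalar_matrix_assoc)
  moreover have "J ** laplacian w = 0"
    using Q_k_mult_laplacian by (simp add: J_def n_def d_def flip: scalar_matrix_assoc)
  moreover have "(\<Sum>j\<in>UNIV. J $ i $ j) = 1" for i
    using Q_k_max_forests_row_sum[of w i] sigma_k_max_forests_pos[of w]
    by (simp add: J_def n_def d_def flip: sum_divide_distrib)
  moreover have "(i, j) \<in> (arcs w)\<^sup>*" if "J $ i $ j \<noteq> 0" for i j
    using Q_k_max_forests_nonzero[of w i j] that by (simp add: J_def n_def d_def)
  ultimately interpret kernel_projection "laplacian w" J
    using laplacian_kernel_fixed by unfold_locales blast+
  show ?thesis
    using group_inverse_exists eq_complement_of_group_inverse by (simp add: J_def)
qed

end
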